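(* Let $\Sigma$ be an alphabet and $(\mathcal{O},d)$ a pseudometric space. A bounded morphism $f : T \to T'$ in $\mathbf{TS}_{\Sigma}\mathcal{O}$ is $\mathbf{Lin}_{\Sigma}\mathcal{O}$-open if and only if the underlying morphism $Wf : WT \to WT'$ in $\mathbf{TS}_{\Sigma}$ is $\mathbf{Lin}_{\Sigma}$-open.
   Context: A (labelled) transition system over $\Sigma$ is a triple $(S,i,\Delta)$ with $S$ a set of states, $i\in S$ the initial state and $\Delta\subseteq S\times\Sigma\times S$. A morphism $(S,i,\Delta)\to(S',i',\Delta')$ is a function $f:S\to S'$ with $f(i)=i'$ and $(f(s),a,f(s'))\in\Delta'$ whenever $(s,a,s')\in\Delta$; these form the category $\mathbf{TS}_{\Sigma}$. For a word $w=a_1\cdots a_n\in\Sigma^*$, the finite linear system $L(w)$ has states $0,\dots,n$, initial state $0$ and transitions $(j-1,a_j,j)$; $\mathbf{Lin}_{\Sigma}$ is the full subcategory of $\mathbf{TS}_{\Sigma}$ on the $L(w)$, $w\in\Sigma^*$. A transition system with observations is a tuple $(S,i,\Delta,\omega)$ with $(S,i,\Delta)$ a transition system and $\omega:S\to\mathcal{O}$. An $\epsilon$-bounded morphism $(S,i,\Delta,\omega)\to(S',i',\Delta',\omega')$ is a morphism $f$ of the underlying transition systems with $d(\omega(s),\omega'(f(s)))\le\epsilon$ for all $s\in S$; a bounded morphism is an $\epsilon$-bounded one for some $\epsilon\ge0$. These form the category $\mathbf{TS}_{\Sigma}\mathcal{O}$, with forgetful functor $W:\mathbf{TS}_{\Sigma}\mathcal{O}\to\mathbf{TS}_{\Sigma}$.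 $\mathbf{Lin}_{\Sigma}\mathcal{O}$ is the full subcategory of $\mathbf{TS}_{\Sigma}\mathcal{O}$ of systems whose underlying transition system is finite linear. Given a category $\mathcal{M}$ and a subcategory $\mathcal{P}$, a morphism $f:X\to Y$ of $\mathcal{M}$ is $\mathcal{P}$-open if for every morphism $e:P\to P'$ in $\mathcal{P}$ and all morphisms $p:P\to X$, $q':P'\to Y$ of $\mathcal{M}$ with $f\circ p=q'\circ e$, there is a morphism $q:P'\to X$ of $\mathcal{M}$ with $q\circ e=p$ and $f\circ q=q'$. *)

theory Defs
  imports Complex_Main
begin

text \<open>Alphabet Sigma = the type 'l of labels. A transition system (S, i, Delta)
  with states of type 's.\<close>

type_synonym ('s, 'l) ts = "'s set \<times> 's \<times> ('s \<times> 'l \<times> 's) set"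

definition states :: "('s, 'l) ts \<Rightarrow> 's set" where "states T = fst T"
definition init :: "('s, 'l) ts \<Rightarrow> 's" where "init T = fst (snd T)"
definition trans :: "('s, 'l) ts \<Rightarrow> ('s \<times> 'l \<times> 's) set" where "trans T = snd (snd T)"

definition wf_ts :: "('s, 'l) ts \<Rightarrow> bool" where
  "wf_ts T \<longleftrightarrow> init T \<in> states T \<and> trans T \<subseteq> states T \<times> UNIV \<times> states T"

definition ts_mor :: "('s, 'l) ts \<Rightarrow> ('t, 'l) ts \<Rightarrow> ('s \<Rightarrow> 't) \<Rightarrow> bool" where
  "ts_mor T T' f \<longleftrightarrow> f ` states T \<subseteq> states T' \<and> f (init T) = init T' \<and>
     (\<forall>s a s'. (s, a, s') \<in> trans T \<longrightarrow> (f s, a, f s') \<in> trans T')"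

definition lin :: "'l list \<Rightarrow> (nat, 'l) ts" where
  "lin w = ({0..length w}, 0, {(j, w ! j, Suc j) | j. j < length w})"

definition pseudometric :: "('o \<Rightarrow> 'o \<Rightarrow> real) \<Rightarrow> bool" where
  "pseudometric d \<longleftrightarrow> (\<forall>x. d x x = 0) \<and> (\<forall>x y. 0 \<le> d x y) \<and> (\<forall>x y. d x y = d y x)
     \<and> (\<forall>x y z. d x z \<le> d x y + d y z)"

definition eps_mor :: "('o \<Rightarrow> 'o \<Rightarrow> real) \<Rightarrow> real \<Rightarrow> ('s, 'l) ts \<Rightarrow> ('s \<Rightarrow> 'o) \<Rightarrow>
    ('t, 'l) ts \<Rightarrow> ('t \<Rightarrow> 'o) \<Rightarrow> ('s \<Rightarrow> 't) \<Rightarrow> bool" where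
  "eps_mor d \<epsilon> T \<omega> T' \<omega>' f \<longleftrightarrow> ts_mor T T' f \<and> (\<forall>s\<in>states T. d (\<omega> s) (\<omega>' (f s)) \<le> \<epsilon>)"

definition bmor :: "('o \<Rightarrow> 'o \<Rightarrow> real) \<Rightarrow> ('s, 'l) ts \<Rightarrow> ('s \<Rightarrow> 'o) \<Rightarrow>
    ('t, 'l) ts \<Rightarrow> ('t \<Rightarrow> 'o) \<Rightarrow> ('s \<Rightarrow> 't) \<Rightarrow> bool" where
  "bmor d T \<omega> T' \<omega>' f \<longleftrightarrow> (\<exists>\<epsilon>\<ge>0. eps_mor d \<epsilon> T \<omega> T' \<omega>' f)"

definition lin_open :: "('a, 'l) ts \<Rightarrow> ('b, 'l) ts \<Rightarrow> ('a \<Rightarrow> 'b) \<Rightarrow> bool" where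
  "lin_open X Y f \<longleftrightarrow>
    (\<forall>(w::'l list) (w'::'l list) e p q'.
       ts_mor (lin w) (lin w') e \<and> ts_mor (lin w) X p \<and> ts_mor (lin w') Y q' \<and>
       (\<forall>s\<in>states (lin w). f (p s) = q' (e s)) \<longrightarrow>
       (\<exists>q. ts_mor (lin w') X q \<and> (\<forall>s\<in>states (lin w). q (e s) = p s) \<and>
            (\<forall>s\<in>states (lin w'). f (q s) = q' s)))"

text \<open>Lin_Sigma O-openness of a morphism f : (X,omX) -> (Y,omY) in TS_Sigma O
  (Lin_Sigma O is the full subcategory on linear systems with observations).\<close>
definition lin_obs_open :: "('o \<Rightarrow> 'o \<Rightarrow> real) \<Rightarrow> ('a, 'l) ts \<Rightarrow> ('a \<Rightarrow> 'o) \<Rightarrow>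
    ('b, 'l) ts \<Rightarrow> ('b \<Rightarrow> 'o) \<Rightarrow> ('a \<Rightarrow> 'b) \<Rightarrow> bool" where
  "lin_obs_open d X \<omega>X Y \<omega>Y f \<longleftrightarrow>
    (\<forall>(w::'l list) (\<omega>P::nat \<Rightarrow> 'o) (w'::'l list) (\<omega>P'::nat \<Rightarrow> 'o) e p q'.
       bmor d (lin w) \<omega>P (lin w') \<omega>P' e \<and> bmor d (lin w) \<omega>P X \<omega>X p \<and>
       bmor d (lin w') \<omega>P' Y \<omega>Y q' \<and>
       (\<forall>s\<in>states (lin w). f (p s) = q' (e s)) \<longrightarrow>
       (\<exists>q. bmor d (lin w') \<omega>P' X \<omega>X q \<and> (\<forall>s\<in>states (lin w). q (e s) = p s) \<and>
            (\<forall>s\<in>states (lin w'). f (q s) = q' s)))"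

end

theory Submission
  imports Defs
begin

text \<open>Both openness conditions ask for the same diagonal fillers; only the bounds differ, and
  these never obstruct. Given a lifting problem in \<open>TS\<^sub>\<Sigma>\<close>, equip the linear systems with
  the observations pulled back along \<open>p\<close> and \<open>q'\<close>: then \<open>p\<close> and \<open>q'\<close> are 0-bounded and
  \<open>e\<close> inherits the bound of \<open>f\<close>. Conversely, a filler \<open>q\<close> of a problem in \<open>TS\<^sub>\<Sigma>O\<close>
  satisfies \<open>f \<circ> q = q'\<close>, so by the triangle inequality it is bounded by the bounds of
  \<open>q'\<close> and \<open>f\<close> added.\<close>

lemma bmor_imp_ts_mor: "bmor d T \<omega> T' \<omega>' f \<Longrightarrow> ts_mor T T' f"
  unfolding bmor_def eps_mor_def by blast

lemma ts_mor_image_states: "ts_mor T T' f \<Longrightarrow> s \<in> states T \<Longrightarrow> f s \<in> states T'"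
  unfolding ts_mor_def by blast

lemma bmor_pullback_obs:
  assumes "pseudometric d" and "ts_mor T T' f"
  shows "bmor d T (\<omega>' \<circ> f) T' \<omega>' f"
  using assms unfolding bmor_def eps_mor_def pseudometric_def by auto

lemma eps_mor_pullback_obs_square:
  assumes f: "eps_mor d \<epsilon> X \<omega>X Y \<omega>Y f"
    and p: "ts_mor P X p" and e: "ts_mor P P' e"
    and comm: "\<forall>s\<in>states P. f (p s) = q' (e s)"
  shows "eps_mor d \<epsilon> P (\<omega>X \<circ> p) P' (\<omega>Y \<circ> q') e"
  unfolding eps_mor_def
proof (intro conjI ballI)
  fix s assume s: "s \<in> states P"
  then have "d (\<omega>X (p s)) (\<omega>Y (f (p s))) \<le> \<epsilon>"
    using f ts_mor_image_states[OF p s] unfolding eps_mor_def by blast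
  with comm s show "d ((\<omega>X \<circ> p) s) ((\<omega>Y \<circ> q') (e s)) \<le> \<epsilon>" by simp
qed (fact e)

lemma eps_mor_lift:
  assumes d: "pseudometric d"
    and q': "eps_mor d \<epsilon>' P \<omega>P Y \<omega>Y q'" and f: "eps_mor d \<epsilon> X \<omega>X Y \<omega>Y f"
    and q: "ts_mor P X q" and comm: "\<forall>s\<in>states P. f (q s) = q' s"
  shows "eps_mor d (\<epsilon>' + \<epsilon>) P \<omega>P X \<omega>X q"
  unfolding eps_mor_def
proof (intro conjI ballI)
  fix s assume s: "s \<in> states P"
  have "d (\<omega>P s) (\<omega>X (q s)) \<le> d (\<omega>P s) (\<omega>Y (q' s)) + d (\<omega>Y (q' s)) (\<omega>X (q s))"
    using d unfolding pseudometric_def by blast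
  moreover have "d (\<omega>Y (q' s)) (\<omega>X (q s)) = d (\<omega>X (q s)) (\<omega>Y (f (q s)))"
    using d comm s unfolding pseudometric_def by metis
  moreover have "d (\<omega>X (q s)) (\<omega>Y (f (q s))) \<le> \<epsilon>"
    using f ts_mor_image_states[OF q s] unfolding eps_mor_def by blast
  moreover have "d (\<omega>P s) (\<omega>Y (q' s)) \<le> \<epsilon>'"
    using q' s unfolding eps_mor_def by blast
  ultimately show "d (\<omega>P s) (\<omega>X (q s)) \<le> \<epsilon>' + \<epsilon>" by linarith
qed (fact q)

lemma lin_obs_open_imp_lin_open:
  fixes d :: "'o \<Rightarrow> 'o \<Rightarrow> real" and X :: "('a, 'l) ts" and Y :: "('b, 'l) ts"
  assumes d: "pseudometric d" and f: "bmor d X \<omega>X Y \<omega>Y f"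
    and open_obs: "lin_obs_open d X \<omega>X Y \<omega>Y f"
  shows "lin_open X Y f"
  unfolding lin_open_def
proof (intro allI impI, elim conjE)
  fix w w' :: "'l list" and e p q'
  assume e: "ts_mor (lin w) (lin w') e" and p: "ts_mor (lin w) X p"
    and q': "ts_mor (lin w') Y q'" and comm: "\<forall>s\<in>states (lin w). f (p s) = q' (e s)"
  have "bmor d (lin w) (\<omega>X \<circ> p) (lin w') (\<omega>Y \<circ> q') e"
    using f eps_mor_pullback_obs_square[OF _ p e comm] unfolding bmor_def by blast
  with open_obs bmor_pullback_obs[OF d p] bmor_pullback_obs[OF d q'] comm
  obtain q where "bmor d (lin w') (\<omega>Y \<circ> q') X \<omega>X q"
    and "\<forall>s\<in>states (lin w). q (e s) = p s" and "\<forall>s\<in>states (lin w'). f (q s) = q' s"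
    unfolding lin_obs_open_def by blast
  then show "\<exists>q. ts_mor (lin w') X q \<and> (\<forall>s\<in>states (lin w). q (e s) = p s) \<and>
      (\<forall>s\<in>states (lin w'). f (q s) = q' s)"
    using bmor_imp_ts_mor by blast
qed

lemma lin_open_imp_lin_obs_open:
  fixes d :: "'o \<Rightarrow> 'o \<Rightarrow> real" and X :: "('a, 'l) ts" and Y :: "('b, 'l) ts"
  assumes d: "pseudometric d" and f: "bmor d X \<omega>X Y \<omega>Y f"
    and open_lin: "lin_open X Y f"
  shows "lin_obs_open d X \<omega>X Y \<omega>Y f"
  unfolding lin_obs_open_def
proof (intro allI impI, elim conjE)
  fix w w' :: "'l list" and \<omega>P \<omega>P' :: "nat \<Rightarrow> 'o" and e p q'
  assume e: "bmor d (lin w) \<omega>P (lin w') \<omega>P' e" and p: "bmor d (lin w) \<omega>P X \<omega>X p"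
    and q': "bmor d (lin w') \<omega>P' Y \<omega>Y q'" and comm: "\<forall>s\<in>states (lin w). f (p s) = q' (e s)"
  obtain q where q: "ts_mor (lin w') X q"
    and q_e: "\<forall>s\<in>states (lin w). q (e s) = p s" and f_q: "\<forall>s\<in>states (lin w'). f (q s) = q' s"
    using open_lin bmor_imp_ts_mor[OF e] bmor_imp_ts_mor[OF p] bmor_imp_ts_mor[OF q'] comm
    unfolding lin_open_def by blast
  obtain \<epsilon>' \<epsilon> where "\<epsilon>' \<ge> 0" "eps_mor d \<epsilon>' (lin w') \<omega>P' Y \<omega>Y q'"
    and "\<epsilon> \<ge> 0" "eps_mor d \<epsilon> X \<omega>X Y \<omega>Y f"
    using q' f unfolding bmor_def by blast
  then have "bmor d (lin w') \<omega>P' X \<omega>X q"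
    using eps_mor_lift[OF d _ _ q f_q] unfolding bmor_def by (meson add_nonneg_nonneg)
  with q_e f_q show "\<exists>q. bmor d (lin w') \<omega>P' X \<omega>X q \<and> (\<forall>s\<in>states (lin w). q (e s) = p s) \<and>
      (\<forall>s\<in>states (lin w'). f (q s) = q' s)"
    by blast
qed

theorem proposition2:
  fixes d :: "'o \<Rightarrow> 'o \<Rightarrow> real"
    and T :: "('a, 'l) ts" and \<omega> :: "'a \<Rightarrow> 'o"
    and T' :: "('b, 'l) ts" and \<omega>' :: "'b \<Rightarrow> 'o"
    and f :: "'a \<Rightarrow> 'b"
  assumes "pseudometric d"
    and "wf_ts T" and "wf_ts T'"
    and "bmor d T \<omega> T' \<omega>' f"
  shows "lin_obs_open d T \<omega> T' \<omega>' f \<longleftrightarrow> lin_open T T' f"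
  using lin_obs_open_imp_lin_open[OF assms(1,4)] lin_open_imp_lin_obs_open[OF assms(1,4)]
  by blast

end
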